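(* Let $(Y,\sigma_Y)$ be an infinite mixing shift of finite type. Then there is a closed $\sigma_Y$-invariant subset $Z\subseteq Y$ such that $(Z,\sigma_Y|_Z)$ is a CAM $\mathbb{Z}$-system.
   Context: A $\mathbb{Z}$-system $(X,T)$ is a compact metric space $X$ with a homeomorphism $T$. It is topologically transitive if for all nonempty open $U,V$ there is $n$ with $T^nU\cap V\neq\emptyset$; the action is faithful if $T^n=\mathrm{id}$ only for $n=0$. A point is periodic if its orbit is finite. The system is chaotic almost minimal (CAM) if: (1) it is topologically transitive and the action is faithful; (2) the periodic points are dense in $X$; (3) every proper closed $T$-invariant subset of $X$ is finite. A shift of finite type is a subshift of $\mathcal{A}^{\mathbb{Z}}$ ($\mathcal{A}$ finite) defined by forbidding a finite set of words; it is mixing if for all nonempty open $U,V$ there is $N$ with $\sigma^nU\cap V\neq\emptyset$ for all $n\ge N$. *)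

theory Defs
  imports "HOL-Analysis.Analysis"
begin

definition shift_top :: "(int \<Rightarrow> 'a::finite) topology" where
  "shift_top = product_topology (\<lambda>_. discrete_topology UNIV) UNIV"

definition shift :: "(int \<Rightarrow> 'a) \<Rightarrow> (int \<Rightarrow> 'a)" where
  "shift x = (\<lambda>i. x (i + 1))"

definition occurs_at :: "'a list \<Rightarrow> (int \<Rightarrow> 'a) \<Rightarrow> int \<Rightarrow> bool" where
  "occurs_at w x n \<longleftrightarrow> (\<forall>i<length w. x (n + int i) = w ! i)"

definition is_SFT :: "(int \<Rightarrow> 'a::finite) set \<Rightarrow> bool" where
  "is_SFT Y \<longleftrightarrow> (\<exists>F :: 'a list set. finite F \<and>
      Y = {x. \<forall>w\<in>F. \<forall>n. \<not> occurs_at w x n})"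

definition mixing_shift :: "(int \<Rightarrow> 'a::finite) set \<Rightarrow> bool" where
  "mixing_shift Y \<longleftrightarrow> (\<forall>U V. openin (subtopology shift_top Y) U \<and> U \<noteq> {} \<and>
      openin (subtopology shift_top Y) V \<and> V \<noteq> {} \<longrightarrow>
      (\<exists>N. \<forall>n\<ge>N. (shift ^^ n) ` U \<inter> V \<noteq> {}))"

definition zit :: "'b set \<Rightarrow> ('b \<Rightarrow> 'b) \<Rightarrow> int \<Rightarrow> 'b \<Rightarrow> 'b" where
  "zit X T n = (if 0 \<le> n then T ^^ nat n else inv_into X T ^^ nat (- n))"

definition CAM_system :: "'b topology \<Rightarrow> ('b \<Rightarrow> 'b) \<Rightarrow> bool" where
  "CAM_system X T \<longleftrightarrow>
     compact_space X \<and> metrizable_space X \<and> homeomorphic_map X X T \<and>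
     \<comment> \<open>(1) topologically transitive and faithful\<close>
     (\<forall>U V. openin X U \<and> U \<noteq> {} \<and> openin X V \<and> V \<noteq> {} \<longrightarrow>
        (\<exists>n::int. zit (topspace X) T n ` U \<inter> V \<noteq> {})) \<and>
     (\<forall>n::int. (\<forall>x\<in>topspace X. zit (topspace X) T n x = x) \<longrightarrow> n = 0) \<and>
     \<comment> \<open>(2) periodic points (finite orbit) are dense\<close>
     X closure_of {x \<in> topspace X. finite (range (\<lambda>n. zit (topspace X) T n x))} = topspace X \<and>
     \<comment> \<open>(3) every proper closed invariant subset is finite\<close>
     (\<forall>C. closedin X C \<and> T ` C = C \<and> C \<noteq> topspace X \<longrightarrow> finite C)"

end

theory Submission
  imports Defs "HOL-Library.Sublist"
begin

text \<open>
  The words \<open>cam_word (k + 1)\<close> contain \<open>cam_word k\<close>, a block of \<open>k + 1\<close> zeros and the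
  powers \<open>cam_word j ^ (k + 1)\<close> for \<open>j \<le> k\<close>. The binary subshift \<open>cam_shift\<close> of all
  sequences whose windows occur in these words is infinite, and the periodic extensions of the
  words make its periodic points dense. A point of \<open>cam_shift\<close> that never sees \<open>cam_word k\<close>
  lives inside the gaps between copies of \<open>cam_word k\<close>, all of which are periodic with the
  common period \<open>gap_period k\<close>; so an infinite closed invariant subset must see every
  \<open>cam_word k\<close> and is therefore dense, i.e. everything.

  In an infinite mixing shift of finite type, mixing and gluing along long enough blocks provide
  two points that start with the same block, return to it after \<open>p\<close> steps and differ in
  between. Substituting them for the two symbols embeds \<open>cam_shift\<close> into \<open>Y\<close>, and the union
  of the \<open>p\<close> shifts of its image is the required CAM subsystem.
\<close>

definition shift_by :: "int \<Rightarrow> (int \<Rightarrow> 'a) \<Rightarrow> int \<Rightarrow> 'a" where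
  "shift_by d x = (\<lambda>i. x (i + d))"

definition cylinder :: "(int \<Rightarrow> 'a) \<Rightarrow> nat \<Rightarrow> (int \<Rightarrow> 'a) set" where
  "cylinder x N = {y. \<forall>i. \<bar>i\<bar> \<le> int N \<longrightarrow> y i = x i}"

lemma shift_by_apply: "shift_by d x i = x (i + d)"
  by (simp add: shift_by_def)

lemma shift_by_shift_by [simp]: "shift_by a (shift_by b x) = shift_by (a + b) x"
  by (simp add: shift_by_def fun_eq_iff add_ac)

lemma shift_by_0 [simp]: "shift_by 0 x = x"
  by (simp add: shift_by_def)

lemma shift_eq_shift_by_1: "shift = shift_by 1"
  by (simp add: shift_def shift_by_def fun_eq_iff)

lemma funpow_shift: "shift ^^ n = shift_by (int n)"
  by (induction n) (auto simp: shift_eq_shift_by_1 fun_eq_iff shift_by_apply algebra_simps)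

lemma shift_by_eq_iff: "shift_by d x = y \<longleftrightarrow> x = shift_by (- d) y"
  by auto

lemma inj_shift_by: "inj (shift_by d)"
  by (rule injI) (simp add: shift_by_eq_iff)

lemma cylinderD: "y \<in> cylinder x N \<Longrightarrow> \<bar>i\<bar> \<le> int N \<Longrightarrow> y i = x i"
  by (simp add: cylinder_def)

lemma self_in_cylinder [simp]: "x \<in> cylinder x N"
  by (simp add: cylinder_def)

lemma topspace_shift_top [simp]: "topspace (shift_top :: (int \<Rightarrow> 'a::finite) topology) = UNIV"
  by (simp add: shift_top_def)

lemma openin_cylinder: "openin (shift_top :: (int \<Rightarrow> 'a::finite) topology) (cylinder x N)"
proof -
  have eq: "cylinder x N = PiE UNIV (\<lambda>i. if \<bar>i\<bar> \<le> int N then {x i} else UNIV)"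
    by (auto simp: cylinder_def PiE_def Pi_def split: if_splits)
  have "{i. (if \<bar>i\<bar> \<le> int N then {x i} else UNIV) \<noteq> UNIV} \<subseteq> {- int N..int N}"
    by auto
  then have "finite {i. (if \<bar>i\<bar> \<le> int N then {x i} else UNIV) \<noteq> UNIV}"
    using finite_subset by blast
  then show ?thesis
    unfolding eq shift_top_def by (subst openin_PiE_gen) auto
qed

lemma openin_contains_cylinder:
  assumes "openin (shift_top :: (int \<Rightarrow> 'a::finite) topology) W" "x \<in> W"
  obtains N where "cylinder x N \<subseteq> W"
proof -
  obtain U where U: "finite {i. U i \<noteq> UNIV}" "x \<in> PiE UNIV U" "PiE UNIV U \<subseteq> W"
    using assms unfolding shift_top_def openin_product_topology_alt by fastforce
  define N where "N = Max (insert 0 ((nat \<circ> abs) ` {i. U i \<noteq> UNIV}))"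
  have bound: "\<bar>i\<bar> \<le> int N" if "U i \<noteq> UNIV" for i
    using Max_ge[of "insert 0 ((nat \<circ> abs) ` {i. U i \<noteq> UNIV})" "nat \<bar>i\<bar>"] U(1) that
    unfolding N_def by (simp add: nat_le_iff)
  have "y i \<in> U i" if "y \<in> cylinder x N" for y i
  proof (cases "U i = UNIV")
    case False
    then show ?thesis using that bound U(2) by (auto simp: cylinder_def PiE_iff)
  qed simp
  then have "cylinder x N \<subseteq> PiE UNIV U"
    by (intro subsetI PiE_I) auto
  with U(3) show ?thesis by (intro that) (rule order_trans)
qed

lemma continuous_map_shift_by:
  "continuous_map (shift_top :: (int \<Rightarrow> 'a::finite) topology) shift_top (shift_by d)"
  unfolding shift_top_def shift_by_def continuous_map_componentwise_UNIV
  by (auto intro: continuous_map_product_projection)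

lemma compact_space_shift_top: "compact_space (shift_top :: (int \<Rightarrow> 'a::finite) topology)"
  unfolding shift_top_def
  by (simp add: compact_space_product_topology compact_space_discrete_topology)

lemma metrizable_space_shift_top: "metrizable_space (shift_top :: (int \<Rightarrow> 'a::finite) topology)"
  unfolding shift_top_def by (simp add: metrizable_space_product_topology)

lemma Hausdorff_space_shift_top: "Hausdorff_space (shift_top :: (int \<Rightarrow> 'a::finite) topology)"
  using metrizable_space_shift_top metrizable_imp_Hausdorff_space by blast

definition shift_invariant :: "(int \<Rightarrow> 'a) set \<Rightarrow> bool" where
  "shift_invariant S \<longleftrightarrow> (\<forall>d. shift_by d ` S \<subseteq> S)"

definition periodic_point :: "(int \<Rightarrow> 'a) \<Rightarrow> bool" where
  "periodic_point x \<longleftrightarrow> (\<exists>P>0. shift_by P x = x)"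

lemma shift_invariantD: "shift_invariant S \<Longrightarrow> x \<in> S \<Longrightarrow> shift_by d x \<in> S"
  unfolding shift_invariant_def by blast

lemma shift_invariantI: "(\<And>d x. x \<in> S \<Longrightarrow> shift_by d x \<in> S) \<Longrightarrow> shift_invariant S"
  unfolding shift_invariant_def by blast

lemma shift_image_eq_iff_shift_invariant: "shift ` S = S \<longleftrightarrow> shift_invariant S"
proof
  assume S: "shift ` S = S"
  have fwd: "shift_by 1 x \<in> S" if "x \<in> S" for x
    using that S by (auto simp: shift_eq_shift_by_1)
  have bwd: "shift_by (-1) x \<in> S" if "x \<in> S" for x
  proof -
    obtain z where "z \<in> S" "x = shift_by 1 z"
      using S \<open>x \<in> S\<close> by (auto simp: shift_eq_shift_by_1)
    then show ?thesis by simp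
  qed
  have pos: "shift_by (int n) x \<in> S" if "x \<in> S" for n x
  proof (induction n)
    case (Suc n)
    then show ?case using fwd[of "shift_by (int n) x"] by (simp add: add.commute)
  qed (use that in simp)
  have neg: "shift_by (- int n) x \<in> S" if "x \<in> S" for n x
  proof (induction n)
    case (Suc n)
    then show ?case using bwd[of "shift_by (- int n) x"] by (simp add: add.commute)
  qed (use that in simp)
  show "shift_invariant S"
  proof (rule shift_invariantI)
    fix d x assume "x \<in> S"
    then show "shift_by d x \<in> S"
      using pos[of x "nat d"] neg[of x "nat (- d)"] by (cases "0 \<le> d") auto
  qed
next
  assume S: "shift_invariant S"
  show "shift ` S = S"
  proof
    show "shift ` S \<subseteq> S"
      using S by (auto simp: shift_eq_shift_by_1 intro: shift_invariantD)
    show "S \<subseteq> shift ` S"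
    proof
      fix x assume "x \<in> S"
      then have "shift_by (-1) x \<in> S" using S by (simp add: shift_invariantD)
      moreover have "x = shift (shift_by (-1) x)" by (simp add: shift_eq_shift_by_1)
      ultimately show "x \<in> shift ` S" by blast
    qed
  qed
qed

lemma shift_by_period_mult:
  assumes "shift_by P x = x"
  shows "shift_by (P * q) x = x"
proof -
  have power: "shift_by (Q * int n) x = x" if "shift_by Q x = x" for Q n
  proof (induction n)
    case (Suc n)
    have "shift_by (Q * int (Suc n)) x = shift_by Q (shift_by (Q * int n) x)"
      by (simp add: algebra_simps)
    then show ?case
      using Suc that by simp
  qed simp
  have "shift_by (- P) x = x"
    using assms by (metis add.right_inverse shift_by_0 shift_by_shift_by)
  then show ?thesis
    using power[OF assms, of "nat q"] power[of "- P" "nat (- q)"] by (cases "0 \<le> q") auto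
qed

lemma finite_periodic_points:
  assumes "P > 0"
  shows "finite {x :: int \<Rightarrow> 'a::finite. shift_by P x = x}"
proof -
  let ?extend = "\<lambda>l::'a list. \<lambda>i. l ! nat (i mod P)"
  have extend: "x = ?extend (map (\<lambda>t. x (int t)) [0..<nat P])" if "shift_by P x = x" for x :: "int \<Rightarrow> 'a"
  proof
    fix i
    have "x i = shift_by (P * (- (i div P))) x i"
      using shift_by_period_mult[OF that] by metis
    also have "\<dots> = x (i mod P)"
      by (simp add: shift_by_apply minus_mult_div_eq_mod)
    finally show "x i = ?extend (map (\<lambda>t. x (int t)) [0..<nat P]) i"
      using assms by simp
  qed
  have "{x. shift_by P x = x} \<subseteq> ?extend ` {l. set l \<subseteq> UNIV \<and> length l = nat P}"
  proof
    fix x :: "int \<Rightarrow> 'a" assume "x \<in> {x. shift_by P x = x}"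
    then have "x = ?extend (map (\<lambda>t. x (int t)) [0..<nat P])"
      using extend by blast
    moreover have "map (\<lambda>t. x (int t)) [0..<nat P] \<in> {l. set l \<subseteq> UNIV \<and> length l = nat P}"
      by simp
    ultimately show "x \<in> ?extend ` {l. set l \<subseteq> UNIV \<and> length l = nat P}"
      by blast
  qed
  moreover have "finite {l::'a list. set l \<subseteq> UNIV \<and> length l = nat P}"
    by (rule finite_lists_length_eq) simp
  ultimately show ?thesis
    using finite_subset by blast
qed

lemma finite_orbit_periodic_point:
  assumes "periodic_point y"
  shows "finite (range (\<lambda>n. shift_by n y))"
proof -
  obtain P where P: "P > 0" "shift_by P y = y"
    using assms unfolding periodic_point_def by blast
  have reduce: "shift_by n y = shift_by (n mod P) y" for n
    using shift_by_period_mult[OF P(2), of "n div P"]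
    by (metis mod_mult_div_eq shift_by_shift_by)
  have "range (\<lambda>n. shift_by n y) \<subseteq> (\<lambda>j. shift_by j y) ` {0..<P}"
  proof
    fix z assume "z \<in> range (\<lambda>n. shift_by n y)"
    then obtain n where "z = shift_by n y"
      by blast
    moreover have "n mod P \<in> {0..<P}"
      using P(1) by simp
    ultimately show "z \<in> (\<lambda>j. shift_by j y) ` {0..<P}"
      using reduce[of n] by blast
  qed
  then show ?thesis
    using finite_subset by blast
qed

lemma periodic_points_infinite_imp_zero:
  fixes Z :: "(int \<Rightarrow> 'a::finite) set"
  assumes "infinite Z" "\<forall>x\<in>Z. shift_by n x = x"
  shows "n = 0"
proof (rule ccontr)
  assume "n \<noteq> 0"
  have "shift_by \<bar>n\<bar> x = x" if "x \<in> Z" for x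
    using assms(2) that by (cases "0 \<le> n") (auto simp: shift_by_eq_iff)
  then have "Z \<subseteq> {x. shift_by \<bar>n\<bar> x = x}"
    by blast
  moreover have "finite {x :: int \<Rightarrow> 'a. shift_by \<bar>n\<bar> x = x}"
    using \<open>n \<noteq> 0\<close> by (intro finite_periodic_points) simp
  ultimately show False
    using assms(1) finite_subset by blast
qed

lemma periodic_point_if_finite_shift_invariant:
  assumes "finite S" "shift_invariant S" "x \<in> S"
  shows "periodic_point x"
proof -
  have "range (\<lambda>n::nat. shift_by (int n) x) \<subseteq> S"
    using assms(2,3) by (auto simp: shift_invariantD)
  then have "\<not> inj (\<lambda>n::nat. shift_by (int n) x)"
    using assms(1) finite_subset finite_imageD infinite_UNIV_nat by blast
  then obtain a b :: nat where ab: "a < b" "shift_by (int a) x = shift_by (int b) x"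
    unfolding inj_def by (metis linorder_neqE_nat)
  then have "shift_by (int b - int a) x = x"
    by (metis shift_by_eq_iff shift_by_shift_by add.commute diff_conv_add_uminus)
  then show ?thesis
    unfolding periodic_point_def using ab(1) by (intro exI[of _ "int b - int a"]) simp
qed

lemma finite_shift_invariant_common_period:
  assumes "finite S" "shift_invariant S"
  obtains P where "P > 0" "\<forall>x\<in>S. shift_by P x = x"
proof -
  define period where "period x = (SOME P. P > 0 \<and> shift_by P x = x)" for x :: "int \<Rightarrow> 'a"
  have period: "period x > 0 \<and> shift_by (period x) x = x" if "x \<in> S" for x
    using periodic_point_if_finite_shift_invariant[OF assms that] unfolding period_def periodic_point_def
    by (rule someI_ex)
  have "shift_by (\<Prod>y\<in>S. period y) x = x" if x: "x \<in> S" for x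
  proof -
    obtain q where "(\<Prod>y\<in>S. period y) = period x * q"
      using dvd_prodI[OF assms(1) x, of period] by blast
    then show ?thesis
      using shift_by_period_mult period[OF x] by metis
  qed
  moreover have "(\<Prod>y\<in>S. period y) > 0"
    using period by (intro prod_pos) auto
  ultimately show ?thesis
    using that by blast
qed

lemma zit_shift:
  assumes "shift_invariant S" "x \<in> S"
  shows "zit S shift n x = shift_by n x"
proof -
  have inv_shift: "inv_into S shift y = shift_by (-1) y" if "y \<in> S" for y
  proof (rule inv_into_f_eq)
    show "inj_on shift S"
      using inj_on_subset[OF inj_shift_by subset_UNIV] by (simp add: shift_eq_shift_by_1)
  qed (use assms(1) that in \<open>simp_all add: shift_invariantD shift_eq_shift_by_1\<close>)
  have "(inv_into S shift ^^ m) x = shift_by (- int m) x" for m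
  proof (induction m)
    case (Suc m)
    have "shift_by (- int m) x \<in> S"
      using assms by (rule shift_invariantD)
    then show ?case
      using Suc by (simp add: inv_shift add_ac)
  qed simp
  then show ?thesis
    by (cases "0 \<le> n") (auto simp: zit_def funpow_shift)
qed

lemma homeomorphic_map_shift_subtopology:
  assumes "shift_invariant Z"
  shows "homeomorphic_map (subtopology shift_top Z) (subtopology shift_top Z)
           (shift :: (int \<Rightarrow> 'a::finite) \<Rightarrow> _)"
proof -
  have "continuous_map (subtopology shift_top Z) (subtopology shift_top Z) (shift_by d :: (int \<Rightarrow> 'a) \<Rightarrow> _)"
    for d
    using assms
    by (auto simp: continuous_map_in_subtopology shift_invariantD
        intro!: continuous_map_from_subtopology continuous_map_shift_by)
  then show ?thesis
    unfolding homeomorphic_map_maps homeomorphic_maps_def shift_eq_shift_by_1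
    by (intro exI[of _ "shift_by (-1)"]) auto
qed

section \<open>A criterion for CAM subshifts\<close>

definition almost_minimal :: "(int \<Rightarrow> 'a::finite) set \<Rightarrow> bool" where
  "almost_minimal Z \<longleftrightarrow>
     (\<forall>D. D \<subseteq> Z \<and> closedin shift_top D \<and> shift_invariant D \<and> infinite D \<longrightarrow> D = Z)"

lemma almost_minimalD:
  "almost_minimal Z \<Longrightarrow> D \<subseteq> Z \<Longrightarrow> closedin shift_top D \<Longrightarrow> shift_invariant D \<Longrightarrow>
    infinite D \<Longrightarrow> D = Z"
  unfolding almost_minimal_def by blast

lemma closedin_never_visiting:
  assumes "closedin shift_top Z" "openin shift_top W"
  shows "closedin (shift_top :: (int \<Rightarrow> 'a::finite) topology) {z\<in>Z. \<forall>n. shift_by n z \<notin> W}"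
proof -
  have "closedin (shift_top :: (int \<Rightarrow> 'a::finite) topology) {z. shift_by n z \<in> UNIV - W}" for n
    using closedin_continuous_map_preimage[OF continuous_map_shift_by, of "UNIV - W"] assms(2)
    by (auto simp: closedin_def Diff_Diff_Int)
  then have "closedin shift_top (Z \<inter> (\<Inter>n. {z. shift_by n z \<in> UNIV - W}))"
    using assms(1) by (intro closedin_Int closedin_Inter) auto
  moreover have "{z\<in>Z. \<forall>n. shift_by n z \<notin> W} = Z \<inter> (\<Inter>n. {z. shift_by n z \<in> UNIV - W})"
    by auto
  ultimately show ?thesis
    by simp
qed

text \<open>Points whose orbit avoids a nonempty open set form a closed invariant proper subset,
  hence a finite one; transitivity follows because an infinite set cannot be covered by two
  such sets.\<close>

lemma almost_minimal_finite_never_visiting: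
  assumes "almost_minimal Z" "closedin shift_top Z" "shift_invariant Z"
    and "openin shift_top W" "W \<inter> Z \<noteq> {}"
  shows "finite {z\<in>Z. \<forall>n. shift_by n z \<notin> W}"
proof (rule ccontr)
  let ?E = "{z\<in>Z. \<forall>n. shift_by n z \<notin> W}"
  assume "infinite ?E"
  moreover have "shift_invariant ?E"
    using assms(3) by (auto intro!: shift_invariantI simp: shift_invariantD add.commute)
  ultimately have "?E = Z"
    using assms(1,2,4) closedin_never_visiting by (intro almost_minimalD) auto
  moreover obtain z where "z \<in> W" "z \<in> Z"
    using assms(5) by auto
  ultimately have "shift_by 0 z \<notin> W"
    by blast
  with \<open>z \<in> W\<close> show False
    by simp
qed

lemma zit_subtopology_shift:
  fixes Z :: "(int \<Rightarrow> 'a::finite) set"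
  assumes "shift_invariant Z" "x \<in> Z"
  shows "zit (topspace (subtopology shift_top Z)) shift n x = shift_by n x"
  using zit_shift[OF assms] by simp

lemma almost_minimal_transitive:
  fixes Z :: "(int \<Rightarrow> 'a::finite) set"
  assumes amin: "almost_minimal Z" and closed: "closedin shift_top Z"
    and inv: "shift_invariant Z" and inf: "infinite Z"
    and U: "openin (subtopology shift_top Z) U" "U \<noteq> {}"
    and V: "openin (subtopology shift_top Z) V" "V \<noteq> {}"
  shows "\<exists>n. zit (topspace (subtopology shift_top Z)) shift n ` U \<inter> V \<noteq> {}"
proof -
  obtain W1 W2 where W: "openin shift_top W1" "U = W1 \<inter> Z" "openin shift_top W2" "V = W2 \<inter> Z"
    using U(1) V(1) by (auto simp: openin_subtopology)
  have "finite {z\<in>Z. \<forall>n. shift_by n z \<notin> W1}" "finite {z\<in>Z. \<forall>n. shift_by n z \<notin> W2}"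
    using W U(2) V(2) almost_minimal_finite_never_visiting[OF amin closed inv] by auto
  then have "\<not> Z \<subseteq> {z\<in>Z. \<forall>n. shift_by n z \<notin> W1} \<union> {z\<in>Z. \<forall>n. shift_by n z \<notin> W2}"
    using inf finite_subset by blast
  then obtain z a b where z: "z \<in> Z" "shift_by a z \<in> W1" "shift_by b z \<in> W2"
    by blast
  have "shift_by a z \<in> Z" "shift_by b z \<in> Z"
    using inv z(1) by (simp_all add: shift_invariantD)
  then have "shift_by a z \<in> U" "zit (topspace (subtopology shift_top Z)) shift (b - a) (shift_by a z) \<in> V"
    using W z zit_subtopology_shift[OF inv] by simp_all
  then show ?thesis
    by blast
qed

lemma periodic_points_dense_subtopology:
  fixes Z :: "(int \<Rightarrow> 'a::finite) set"
  assumes inv: "shift_invariant Z" and dense: "Z \<subseteq> shift_top closure_of {y\<in>Z. periodic_point y}"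
  defines "X \<equiv> subtopology shift_top Z"
  shows "X closure_of {x \<in> topspace X. finite (range (\<lambda>n. zit (topspace X) shift n x))} = topspace X"
proof -
  let ?finite_orbit = "{x \<in> topspace X. finite (range (\<lambda>n. zit (topspace X) shift n x))}"
  have "{y\<in>Z. periodic_point y} \<subseteq> Z \<inter> ?finite_orbit"
  proof
    fix y assume "y \<in> {y\<in>Z. periodic_point y}"
    then have "y \<in> Z" "finite (range (\<lambda>n. shift_by n y))"
      using finite_orbit_periodic_point by auto
    then show "y \<in> Z \<inter> ?finite_orbit"
      using zit_subtopology_shift[OF inv] unfolding X_def by simp
  qed
  then have "shift_top closure_of {y\<in>Z. periodic_point y} \<subseteq> shift_top closure_of (Z \<inter> ?finite_orbit)"
    by (rule closure_of_mono)
  then have "Z \<subseteq> X closure_of ?finite_orbit"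
    using dense unfolding X_def closure_of_subtopology by blast
  then show ?thesis
    using closure_of_subset_topspace[of X ?finite_orbit] unfolding X_def by auto
qed

lemma CAM_system_subshift:
  fixes Z :: "(int \<Rightarrow> 'a::finite) set"
  assumes closed: "closedin shift_top Z" and inv: "shift_invariant Z" and inf: "infinite Z"
    and dense: "Z \<subseteq> shift_top closure_of {y\<in>Z. periodic_point y}"
    and amin: "almost_minimal Z"
  shows "CAM_system (subtopology shift_top Z) shift"
proof -
  let ?X = "subtopology shift_top Z"
  have compact: "compact_space ?X"
    by (rule compact_space_subtopology[OF closedin_compact_space[OF compact_space_shift_top closed]])
  have metrizable: "metrizable_space ?X"
    by (rule metrizable_space_subtopology[OF metrizable_space_shift_top])
  have transitive: "\<forall>U V. openin ?X U \<and> U \<noteq> {} \<and> openin ?X V \<and> V \<noteq> {} \<longrightarrow>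
      (\<exists>n. zit (topspace ?X) shift n ` U \<inter> V \<noteq> {})"
    using almost_minimal_transitive[OF amin closed inv inf] by blast
  have faithful: "\<forall>n. (\<forall>x\<in>topspace ?X. zit (topspace ?X) shift n x = x) \<longrightarrow> n = 0"
    using zit_subtopology_shift[OF inv] inf by (auto intro: periodic_points_infinite_imp_zero[of Z])
  have proper_finite: "\<forall>C. closedin ?X C \<and> shift ` C = C \<and> C \<noteq> topspace ?X \<longrightarrow> finite C"
  proof (intro allI impI, elim conjE)
    fix C assume C: "closedin ?X C" "shift ` C = C" "C \<noteq> topspace ?X"
    show "finite C"
    proof (rule ccontr)
      assume "infinite C"
      then have "C = Z"
        using C closedin_subset[OF C(1)] closedin_trans_full[OF C(1) closed]
        by (intro almost_minimalD[OF amin]) (auto simp: shift_image_eq_iff_shift_invariant)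
      with C(3) show False
        by simp
    qed
  qed
  show ?thesis
    unfolding CAM_system_def
    using compact metrizable homeomorphic_map_shift_subtopology[OF inv] transitive faithful
      periodic_points_dense_subtopology[OF inv dense] proper_finite
    by (intro conjI) assumption+
qed

section \<open>A sequence of binary words\<close>

fun cam_word :: "nat \<Rightarrow> bool list" where
  "cam_word 0 = [True]"
| "cam_word (Suc k) = cam_word k @ replicate (Suc k) False @ cam_word k @
     concat (map (\<lambda>j. concat (replicate (Suc k) (cam_word j)) @ cam_word k) [0..<Suc k])"

lemma length_cam_word_pos: "length (cam_word k) > 0"
  by (induction k) auto

lemma cam_word_nonempty: "cam_word k \<noteq> []"
  using length_cam_word_pos[of k] by auto

lemma cam_word_nth_0: "cam_word k ! 0 = True"
  by (induction k) (simp_all add: nth_append length_cam_word_pos cam_word_nonempty)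

lemma sublist_cam_word_mono: "k \<le> j \<Longrightarrow> sublist (cam_word k) (cam_word j)"
proof (induction j)
  case (Suc j)
  have "sublist (cam_word j) (cam_word (Suc j))"
    unfolding cam_word.simps(2) by (rule sublist_append_rightI)
  then show ?case
    using Suc by (cases "k = Suc j") (auto intro: sublist_order.order_trans)
qed simp

lemma length_concat_replicate: "length (concat (replicate r u)) = r * length u"
  by (induction r) auto

lemma nth_concat_replicate:
  "t < r * length u \<Longrightarrow> concat (replicate r u) ! t = u ! (t mod length u)"
proof (induction r arbitrary: t)
  case (Suc r)
  show ?case
  proof (cases "t < length u")
    case False
    then have "concat (replicate (Suc r) u) ! t = concat (replicate r u) ! (t - length u)"
      by (simp add: nth_append)
    also have "\<dots> = u ! ((t - length u) mod length u)"
      using Suc False by (intro Suc.IH) auto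
    finally show ?thesis
      using False by (simp add: le_mod_geq)
  qed (simp add: nth_append)
qed simp

lemma sublist_concat_replicate_cam_word:
  assumes "k \<le> j" "r \<le> Suc j"
  shows "sublist (concat (replicate r (cam_word k))) (cam_word (Suc j))"
proof -
  let ?block = "\<lambda>i. concat (replicate (Suc j) (cam_word i)) @ cam_word j"
  have "concat (replicate (Suc j) (cam_word k)) =
      concat (replicate r (cam_word k)) @ concat (replicate (Suc j - r) (cam_word k))"
    using assms(2) by (metis concat_append le_add_diff_inverse replicate_add)
  then have "sublist (concat (replicate r (cam_word k))) (?block k)"
    unfolding sublist_def
    by (intro exI[of _ "[]"] exI[of _ "concat (replicate (Suc j - r) (cam_word k)) @ cam_word j"])
      (simp only: append_Nil append_assoc)
  also have "sublist (?block k) (concat (map ?block [0..<Suc j]))"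
  proof -
    have "k \<in> set [0..<Suc j]"
      using assms(1) by auto
    then obtain xs ys where "[0..<Suc j] = xs @ k # ys"
      by (meson split_list)
    then have "concat (map ?block [0..<Suc j]) =
        concat (map ?block xs) @ ?block k @ concat (map ?block ys)"
      by (simp only: map_append concat_append list.map concat.simps)
    then show ?thesis
      by (metis sublist_appendI)
  qed
  also have "sublist (concat (map ?block [0..<Suc j])) (cam_word (Suc j))"
  proof -
    have "cam_word (Suc j) =
        (cam_word j @ replicate (Suc j) False @ cam_word j) @ concat (map ?block [0..<Suc j])"
      by (simp only: cam_word.simps append_assoc)
    then show ?thesis
      by (metis sublist_append_leftI)
  qed
  finally show ?thesis .
qed

definition gap_period :: "nat \<Rightarrow> nat" where
  "gap_period k = (\<Prod>i<k. length (cam_word i))"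

lemma gap_period_pos: "gap_period k > 0"
  unfolding gap_period_def using length_cam_word_pos by (simp add: prod_pos)

lemma length_cam_word_dvd_gap_period: "i < k \<Longrightarrow> length (cam_word i) dvd gap_period k"
  unfolding gap_period_def by (rule dvd_prodI) auto

definition periodic_list :: "nat \<Rightarrow> 'b list \<Rightarrow> bool" where
  "periodic_list D g \<longleftrightarrow> (\<forall>i. i + D < length g \<longrightarrow> g ! (i + D) = g ! i)"

lemma periodic_list_replicate: "periodic_list D (replicate m x)"
  unfolding periodic_list_def by simp

lemma periodic_list_concat_replicate:
  assumes "length u dvd D" "u \<noteq> []"
  shows "periodic_list D (concat (replicate r u))"
  unfolding periodic_list_def
proof (intro allI impI)
  fix i assume i: "i + D < length (concat (replicate r u))"
  have "concat (replicate r u) ! (i + D) = u ! ((i + D) mod length u)"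
    using i by (intro nth_concat_replicate) (simp add: length_concat_replicate)
  also have "(i + D) mod length u = i mod length u"
    using assms(1) by (simp add: mod_add_right_eq[symmetric])
  also have "u ! (i mod length u) = concat (replicate r u) ! i"
    using i by (intro nth_concat_replicate[symmetric]) (simp add: length_concat_replicate)
  finally show "concat (replicate r u) ! (i + D) = concat (replicate r u) ! i" .
qed

inductive gap_decomposable :: "nat \<Rightarrow> bool list \<Rightarrow> bool" for k where
  base: "gap_decomposable k (cam_word k)"
| gap: "gap_decomposable k w1 \<Longrightarrow> gap_decomposable k w2 \<Longrightarrow> periodic_list (gap_period k) g \<Longrightarrow>
    gap_decomposable k (w1 @ g @ w2)"

lemma gap_decomposable_ends:
  "gap_decomposable k w \<Longrightarrow> length (cam_word k) \<le> length w \<and>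
    take (length (cam_word k)) w = cam_word k \<and> drop (length w - length (cam_word k)) w = cam_word k"
  by (induction rule: gap_decomposable.induct) auto

lemma gap_decomposable_append:
  "gap_decomposable k w1 \<Longrightarrow> gap_decomposable k w2 \<Longrightarrow> gap_decomposable k (w1 @ w2)"
  using gap_decomposable.gap[of k w1 w2 "[]"] by (simp add: periodic_list_def)

lemma gap_decomposable_concat_replicate:
  "gap_decomposable k u \<Longrightarrow> gap_decomposable k (concat (replicate (Suc r) u))"
  by (induction r) (simp_all add: gap_decomposable_append)

lemma gap_decomposable_append_concat:
  assumes "gap_decomposable k w" "\<And>x v. x \<in> set xs \<Longrightarrow> gap_decomposable k v \<Longrightarrow> gap_decomposable k (v @ g x)"
  shows "gap_decomposable k (w @ concat (map g xs))"
  using assms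
proof (induction xs arbitrary: w)
  case (Cons x xs)
  have "gap_decomposable k ((w @ g x) @ concat (map g xs))"
    using Cons.prems by (intro Cons.IH) auto
  then show ?case
    by simp
qed simp

text \<open>The gaps are the blocks of zeros and the powers of \<open>cam_word i\<close> for \<open>i < k\<close>, whose
  lengths divide \<open>gap_period k\<close>.\<close>

lemma gap_decomposable_cam_word_Suc:
  assumes "k \<le> j" and IH: "\<And>i. k \<le> i \<Longrightarrow> i \<le> j \<Longrightarrow> gap_decomposable k (cam_word i)"
  shows "gap_decomposable k (cam_word (Suc j))"
proof -
  let ?block = "\<lambda>i. concat (replicate (Suc j) (cam_word i)) @ cam_word j"
  have word_j: "gap_decomposable k (cam_word j)"
    using assms by simp
  have "gap_decomposable k (v @ ?block i)" if "i \<in> set [0..<Suc j]" "gap_decomposable k v" for i v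
  proof (cases "i < k")
    case True
    have "periodic_list (gap_period k) (concat (replicate (Suc j) (cam_word i)))"
      using length_cam_word_dvd_gap_period[OF True] cam_word_nonempty
      by (rule periodic_list_concat_replicate)
    from gap_decomposable.gap[OF that(2) word_j this] show ?thesis
      by simp
  next
    case False
    then have "gap_decomposable k (concat (replicate (Suc j) (cam_word i)))"
      using that(1) IH by (intro gap_decomposable_concat_replicate) auto
    then show ?thesis
      by (rule gap_decomposable_append[OF that(2) gap_decomposable_append[OF _ word_j]])
  qed
  then have "gap_decomposable k (cam_word j @ concat (map ?block [0..<Suc j]))"
    using word_j by (rule gap_decomposable_append_concat[rotated])
  then show ?thesis
    unfolding cam_word.simps(2) by (rule gap_decomposable.gap[OF word_j _ periodic_list_replicate])
qed

lemma gap_decomposable_cam_word: "k \<le> j \<Longrightarrow> gap_decomposable k (cam_word j)"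
proof (induction j rule: less_induct)
  case (less j)
  show ?case
  proof (cases "k = j")
    case True
    show ?thesis
      unfolding True by (rule gap_decomposable.base)
  next
    case False
    then obtain i where "j = Suc i" "k \<le> i"
      using less.prems by (cases j) auto
    then show ?thesis
      using less.IH gap_decomposable_cam_word_Suc by simp
  qed
qed

definition avoids_on :: "'b list \<Rightarrow> 'b list \<Rightarrow> nat \<Rightarrow> nat \<Rightarrow> bool" where
  "avoids_on u w a m \<longleftrightarrow> a + m \<le> length w \<and>
     (\<forall>j. a \<le> j \<and> j + length u \<le> a + m \<longrightarrow> take (length u) (drop j w) \<noteq> u)"

lemma avoids_onD:
  "avoids_on u w a m \<Longrightarrow> a \<le> j \<Longrightarrow> j + length u \<le> a + m \<Longrightarrow> take (length u) (drop j w) \<noteq> u"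
  unfolding avoids_on_def by blast

lemma avoids_on_append_left:
  assumes "avoids_on u (w1 @ w2) a m" "a + m \<le> length w1"
  shows "avoids_on u w1 a m"
  using assms unfolding avoids_on_def by auto

lemma avoids_on_append_right:
  assumes "avoids_on u (w1 @ w2) a m" "length w1 \<le> a"
  shows "avoids_on u w2 (a - length w1) m"
  unfolding avoids_on_def
proof (intro conjI allI impI)
  show "a - length w1 + m \<le> length w2"
    using assms unfolding avoids_on_def by auto
  fix j assume j: "a - length w1 \<le> j \<and> j + length u \<le> a - length w1 + m"
  have "take (length u) (drop (length w1 + j) (w1 @ w2)) \<noteq> u"
    using j assms by (intro avoids_onD[OF assms(1)]) auto
  then show "take (length u) (drop j w2) \<noteq> u"
    by simp
qed

lemma avoids_on_straddling_gap:
  assumes "avoids_on u (w1 @ g @ w2) a m"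
    and "length u \<le> length w1" "drop (length w1 - length u) w1 = u" "take (length u) w2 = u"
    and "length w1 < a + m" "a < length w1 + length g"
  shows "length w1 < a + length u" "a + m < length w1 + length g + length u"
proof -
  have "take (length u) (drop (length w1 - length u) (w1 @ g @ w2)) = u"
    using assms(2,3) by simp
  then show "length w1 < a + length u"
    using assms(2,5) avoids_onD[OF assms(1), of "length w1 - length u"] by linarith
  have "take (length u) (drop (length w1 + length g) (w1 @ g @ w2)) = u"
    using assms(4) by simp
  then show "a + m < length w1 + length g + length u"
    using assms(6) avoids_onD[OF assms(1), of "length w1 + length g"] by linarith
qed

text \<open>Away from its ends, a segment of a gap decomposition of level \<open>k\<close> containing no copy of
  \<open>cam_word k\<close> lies inside a single gap, and so is periodic with period \<open>gap_period k\<close>.\<close>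

lemma gap_decomposable_periodic_avoiding:
  assumes "gap_decomposable k w" "avoids_on (cam_word k) w a m"
    and "a + length (cam_word k) \<le> i" "i + gap_period k + length (cam_word k) < a + m"
  shows "w ! (i + gap_period k) = w ! i"
  using assms
proof (induction arbitrary: a i rule: gap_decomposable.induct)
  case base
  then show ?case
    by (simp add: avoids_on_def)
next
  case (gap w1 w2 g)
  let ?b = "length (cam_word k)" and ?D = "gap_period k" and ?l = "length w1" and ?lg = "length g"
  consider "a + m \<le> ?l" | "?l + ?lg \<le> a" | "?l < a + m" "a < ?l + ?lg"
    by linarith
  then show ?case
  proof cases
    case 1
    then have "w1 ! (i + ?D) = w1 ! i"
      using gap.prems by (intro gap.IH(1)) (auto intro: avoids_on_append_left)
    then show ?thesis
      using 1 gap.prems by (simp add: nth_append)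
  next
    case 2
    then have "w2 ! (i - ?l - ?lg + ?D) = w2 ! (i - ?l - ?lg)"
      using gap.prems avoids_on_append_right[of _ "w1 @ g" w2 a m]
      by (intro gap.IH(2)[of "a - ?l - ?lg"]) auto
    moreover have "i - ?l - ?lg + ?D = i + ?D - ?l - ?lg"
      using 2 gap.prems by simp
    ultimately show ?thesis
      using 2 gap.prems by (simp add: nth_append flip: append_assoc)
  next
    case 3
    have "?b \<le> ?l" "drop (?l - ?b) w1 = cam_word k" "take ?b w2 = cam_word k"
      using gap_decomposable_ends[OF gap.hyps(1)] gap_decomposable_ends[OF gap.hyps(2)] by auto
    from avoids_on_straddling_gap[OF gap.prems(1) this 3]
    have left: "?l < a + ?b" and right: "a + m < ?l + ?lg + ?b" .
    have i: "?l \<le> i" "i + ?D < ?l + ?lg"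
      using left right gap.prems by auto
    moreover have "i - ?l + ?D < ?lg"
      using i by linarith
    ultimately have "g ! (i + ?D - ?l) = g ! (i - ?l)"
      using gap.hyps(3) unfolding periodic_list_def by (metis Nat.add_diff_assoc2)
    then show ?thesis
      using i by (simp add: nth_append)
  qed
qed

section \<open>The binary subshift generated by the words\<close>

definition window :: "(int \<Rightarrow> 'b) \<Rightarrow> nat \<Rightarrow> 'b list" where
  "window x N = map (\<lambda>t. x (int t - int N)) [0..<2*N+1]"

definition cam_shift :: "(int \<Rightarrow> bool) set" where
  "cam_shift = {x. \<forall>N. \<exists>j. sublist (window x N) (cam_word j)}"

lemma length_window [simp]: "length (window x N) = 2*N+1"
  by (simp add: window_def)

lemma nth_window: "t < 2*N+1 \<Longrightarrow> window x N ! t = x (int t - int N)"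
  by (simp add: window_def nth_map_upt del: upt_Suc)

lemma window_eq_iff_cylinder: "window y N = window x N \<longleftrightarrow> y \<in> cylinder x N"
proof
  assume eq: "window y N = window x N"
  show "y \<in> cylinder x N"
    unfolding cylinder_def
  proof (intro CollectI allI impI)
    fix i assume "\<bar>i\<bar> \<le> int N"
    then have "nat (i + int N) < 2*N+1" "int (nat (i + int N)) - int N = i"
      by auto
    then show "y i = x i"
      using nth_window[of "nat (i + int N)" N y] nth_window[of "nat (i + int N)" N x] eq by simp
  qed
next
  assume "y \<in> cylinder x N"
  then show "window y N = window x N"
    unfolding cylinder_def by (intro nth_equalityI) (auto simp: nth_window)
qed

lemma nth_window_in_word:
  assumes "w = p @ window x M @ q" "s < 2*M+1"
  shows "w ! (length p + s) = x (int s - int M)"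
  using assms by (simp add: nth_append nth_window)

lemma sublist_window_shift_by: "sublist (window (shift_by d x) N) (window x (N + nat \<bar>d\<bar>))"
proof -
  define M where "M = N + nat \<bar>d\<bar>"
  define s where "s = nat (int M - int N + d)"
  have s: "s + (2*N+1) \<le> 2*M+1" "int s = int M - int N + d"
    unfolding s_def M_def by auto
  have "window (shift_by d x) N = take (2*N+1) (drop s (window x M))"
  proof (rule nth_equalityI)
    fix t assume "t < length (window (shift_by d x) N)"
    then have t: "t < 2*N+1"
      by simp
    have eq: "int (s + t) - int M = int t - int N + d"
      using s by simp
    have "take (2*N+1) (drop s (window x M)) ! t = x (int (s + t) - int M)"
      using t s by (simp add: nth_window)
    also have "\<dots> = shift_by d x (int t - int N)"
      by (metis eq shift_by_apply)
    finally show "window (shift_by d x) N ! t = take (2*N+1) (drop s (window x M)) ! t"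
      using t by (simp add: nth_window)
  qed (use s in simp)
  then show ?thesis
    unfolding M_def by (metis sublist_order.order_trans sublist_drop sublist_take)
qed

lemma shift_invariant_cam_shift: "shift_invariant cam_shift"
  unfolding shift_invariant_def cam_shift_def
  using sublist_window_shift_by sublist_order.order_trans by blast

lemma closedin_cam_shift: "closedin shift_top cam_shift"
  unfolding closedin_def
proof (intro conjI)
  show "openin shift_top (topspace shift_top - cam_shift)"
  proof (subst openin_subopen, intro ballI)
    fix x assume "x \<in> topspace shift_top - cam_shift"
    then obtain N where N: "\<forall>j. \<not> sublist (window x N) (cam_word j)"
      unfolding cam_shift_def by auto
    have "y \<notin> cam_shift" if "y \<in> cylinder x N" for y
    proof
      assume "y \<in> cam_shift"
      then obtain j where "sublist (window y N) (cam_word j)"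
        unfolding cam_shift_def by blast
      moreover have "window y N = window x N"
        using that window_eq_iff_cylinder by blast
      ultimately show False
        using N by simp
    qed
    then have "cylinder x N \<subseteq> topspace shift_top - cam_shift"
      by auto
    then show "\<exists>T. openin shift_top T \<and> x \<in> T \<and> T \<subseteq> topspace shift_top - cam_shift"
      using openin_cylinder[of x N] self_in_cylinder[of x N] by blast
  qed
qed simp

lemma window_shift_by_occurrence:
  assumes "occurs_at w y c" "w = p @ window x N @ q"
  shows "window (shift_by (c + int (length p) + int N) y) N = window x N"
proof (rule nth_equalityI)
  fix t assume "t < length (window (shift_by (c + int (length p) + int N) y) N)"
  then have t: "t < 2*N+1"
    by simp
  then have "length p + t < length w"
    using assms(2) by simp
  then have "y (c + int (length p + t)) = w ! (length p + t)"
    using assms(1) unfolding occurs_at_def by blast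
  also have "\<dots> = window x N ! t"
    using assms(2) t by (simp add: nth_append)
  finally show "window (shift_by (c + int (length p) + int N) y) N ! t = window x N ! t"
    by (simp add: nth_window[OF t] shift_by_apply algebra_simps)
qed simp

definition periodic_extension :: "'b list \<Rightarrow> int \<Rightarrow> 'b" where
  "periodic_extension u = (\<lambda>i. u ! nat (i mod int (length u)))"

lemma periodic_extension_period:
  "shift_by (int (length u)) (periodic_extension u) = periodic_extension u"
  by (simp add: periodic_extension_def shift_by_def)

lemma occurs_at_periodic_extension: "occurs_at u (periodic_extension u) 0"
  unfolding occurs_at_def periodic_extension_def by simp

lemma sublist_window_periodic_extension:
  assumes "u \<noteq> []"
  shows "sublist (window (periodic_extension u) N) (concat (replicate (2*N+2) u))"
proof -
  let ?l = "length u"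
  define r where "r = 2*N+2"
  define s where "s = nat ((- int N) mod int ?l)"
  have s: "s < ?l" "int s = (- int N) mod int ?l"
    unfolding s_def using assms by (auto simp: nat_less_iff)
  have bound: "s + (2*N+1) \<le> r * ?l"
  proof -
    have "(2*N+1) * 1 \<le> (2*N+1) * ?l"
      using assms by (intro mult_le_mono2) (simp add: Suc_leI)
    then show ?thesis
      using s(1) unfolding r_def by (simp add: algebra_simps)
  qed
  have "window (periodic_extension u) N = take (2*N+1) (drop s (concat (replicate r u)))"
  proof (rule nth_equalityI)
    fix t assume "t < length (window (periodic_extension u) N)"
    then have t: "t < 2*N+1"
      by simp
    have "take (2*N+1) (drop s (concat (replicate r u))) ! t = concat (replicate r u) ! (s + t)"
      using t bound by (simp add: length_concat_replicate)
    also have "\<dots> = u ! ((s + t) mod ?l)"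
      using t bound by (intro nth_concat_replicate) simp
    also have "(s + t) mod ?l = nat ((int t - int N) mod int ?l)"
    proof -
      have "int ((s + t) mod ?l) = ((- int N) mod int ?l + int t) mod int ?l"
        using s(2) by (simp add: zmod_int)
      also have "\<dots> = (int t - int N) mod int ?l"
        by (simp add: mod_add_left_eq)
      finally show ?thesis
        by simp
    qed
    finally show "window (periodic_extension u) N ! t =
        take (2*N+1) (drop s (concat (replicate r u))) ! t"
      using t by (simp add: nth_window periodic_extension_def)
  qed (use bound in \<open>simp add: length_concat_replicate\<close>)
  then show ?thesis
    unfolding r_def by (metis sublist_order.order_trans sublist_drop sublist_take)
qed

lemma periodic_extension_cam_word_in_cam_shift: "periodic_extension (cam_word j) \<in> cam_shift"
  unfolding cam_shift_def
proof (intro CollectI allI)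
  fix N
  have "sublist (window (periodic_extension (cam_word j)) N) (cam_word (Suc (max j (2*N+2))))"
    using sublist_window_periodic_extension[OF cam_word_nonempty]
      sublist_concat_replicate_cam_word[of j "max j (2*N+2)" "2*N+2"]
    by (meson max.cobounded1 max.cobounded2 le_SucI sublist_order.order_trans)
  then show "\<exists>j'. sublist (window (periodic_extension (cam_word j)) N) (cam_word j')"
    by blast
qed

lemma cam_shift_windowE:
  assumes "x \<in> cam_shift"
  obtains j p q where "k \<le> j" "cam_word j = p @ window x N @ q"
proof -
  obtain i where "sublist (window x N) (cam_word i)"
    using assms unfolding cam_shift_def by blast
  then have "sublist (window x N) (cam_word (max i k))"
    using sublist_cam_word_mono[of i "max i k"] sublist_order.order_trans by simp
  then show ?thesis
    using that unfolding sublist_def by (metis max.cobounded2)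
qed

lemma cam_shift_periodic_dense: "cam_shift \<subseteq> shift_top closure_of {y\<in>cam_shift. periodic_point y}"
proof
  fix x assume x: "x \<in> cam_shift"
  show "x \<in> shift_top closure_of {y\<in>cam_shift. periodic_point y}"
    unfolding in_closure_of
  proof (intro conjI allI impI; (elim conjE)?)
    fix W assume "x \<in> W" "openin shift_top W"
    then obtain N where N: "cylinder x N \<subseteq> W"
      using openin_contains_cylinder by blast
    obtain j p q where pq: "cam_word j = p @ window x N @ q"
      using x by (rule cam_shift_windowE)
    define y where "y = shift_by (int (length p) + int N) (periodic_extension (cam_word j))"
    have "y \<in> cam_shift"
      unfolding y_def using periodic_extension_cam_word_in_cam_shift shift_invariant_cam_shift
      by (simp add: shift_invariantD)
    moreover have "periodic_point y"
      unfolding periodic_point_def y_def using length_cam_word_pos[of j]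
      by (intro exI[of _ "int (length (cam_word j))"])
        (metis add.commute of_nat_0_less_iff periodic_extension_period shift_by_shift_by)
    moreover have "y \<in> W"
      using window_shift_by_occurrence[OF occurs_at_periodic_extension pq] N
      by (simp add: y_def window_eq_iff_cylinder subset_iff)
    ultimately show "\<exists>y. y \<in> {y\<in>cam_shift. periodic_point y} \<and> y \<in> W"
      by blast
  qed simp
qed

text \<open>The periodic extension of \<open>cam_word (Suc k)\<close> sees the last \<open>False\<close> of the block of
  \<open>Suc k\<close> zeros and, \<open>P\<close> places later, the leading \<open>True\<close> of \<open>cam_word k\<close>, for every
  \<open>0 < P \<le> Suc k\<close>.\<close>

lemma periodic_extension_cam_word_not_periodic:
  assumes "0 < P" "P \<le> Suc k"
  shows "shift_by (int P) (periodic_extension (cam_word (Suc k))) \<noteq> periodic_extension (cam_word (Suc k))"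
proof -
  let ?u = "cam_word (Suc k)" and ?l = "length (cam_word k)"
  define i where "i = ?l + Suc k - P"
  have lengths: "i + P < length ?u" "i < length ?u"
    unfolding i_def using assms length_cam_word_pos[of k] by auto
  have "?u = cam_word k @ replicate (Suc k) False @ cam_word k @
      concat (map (\<lambda>j. concat (replicate (Suc k) (cam_word j)) @ cam_word k) [0..<Suc k])"
    by (simp only: cam_word.simps)
  moreover have "\<not> i < ?l" "i - ?l < Suc k" "i + P = ?l + Suc k"
    unfolding i_def using assms by auto
  ultimately have "?u ! i = False" "?u ! (i + P) = True"
    by (simp_all add: nth_append cam_word_nth_0 cam_word_nonempty del: replicate_Suc)
  moreover have "periodic_extension ?u (int i) = ?u ! i"
    "shift_by (int P) (periodic_extension ?u) (int i) = ?u ! (i + P)"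
    unfolding periodic_extension_def shift_by_apply using lengths
    by (simp_all flip: of_nat_add)
  ultimately show ?thesis
    by (metis (full_types))
qed

lemma infinite_cam_shift: "infinite cam_shift"
proof
  assume "finite cam_shift"
  then obtain P where P: "P > 0" "\<forall>x\<in>cam_shift. shift_by P x = x"
    using shift_invariant_cam_shift by (rule finite_shift_invariant_common_period)
  then have "shift_by (int (nat P)) (periodic_extension (cam_word (Suc (nat P)))) =
      periodic_extension (cam_word (Suc (nat P)))"
    using periodic_extension_cam_word_in_cam_shift[of "Suc (nat P)"] by simp
  moreover have "0 < nat P"
    using P(1) by simp
  ultimately show False
    using periodic_extension_cam_word_not_periodic[of "nat P" "nat P"] by simp
qed

lemma avoids_on_window:
  assumes "w = p @ window x M @ q" "\<not> (\<exists>c. occurs_at u x c)"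
  shows "avoids_on u w (length p) (2*M+1)"
  unfolding avoids_on_def
proof (intro conjI allI impI notI)
  show "length p + (2*M+1) \<le> length w"
    using assms(1) by simp
  fix j assume j: "length p \<le> j \<and> j + length u \<le> length p + (2*M+1)"
    and occurrence: "take (length u) (drop j w) = u"
  have "x (int j - int (length p) - int M + int t) = u ! t" if "t < length u" for t
  proof -
    have "j + length u \<le> length w"
      using j assms(1) by simp
    then have "u ! t = w ! (j + t)"
      using occurrence that by (metis nth_take nth_drop le_add_diff_inverse le_diff_conv2 add_leD1
          length_drop)
    also have "\<dots> = w ! (length p + (j - length p + t))"
      using j by (intro arg_cong[where f = "(!) w"]) linarith
    also have "\<dots> = x (int (j - length p + t) - int M)"
      using j that by (intro nth_window_in_word[OF assms(1)]) linarith
    finally show ?thesis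
      using j by (simp add: algebra_simps)
  qed
  then have "occurs_at u x (int j - int (length p) - int M)"
    unfolding occurs_at_def by blast
  with assms(2) show False
    by blast
qed

lemma cam_shift_periodic_if_not_occurs:
  assumes x: "x \<in> cam_shift" and never: "\<not> (\<exists>c. occurs_at (cam_word k) x c)"
  shows "shift_by (int (gap_period k)) x = x"
proof
  fix t
  let ?b = "length (cam_word k)" and ?D = "gap_period k"
  define M where "M = nat \<bar>t\<bar> + ?D + ?b + 1"
  define s where "s = nat (t + int M)"
  have s: "int s = t + int M" "?b \<le> s" "s + ?D + ?b < 2*M+1"
    unfolding s_def M_def by auto
  obtain j p q where pq: "k \<le> j" "cam_word j = p @ window x M @ q"
    using x by (rule cam_shift_windowE)
  have "cam_word j ! (length p + s + ?D) = cam_word j ! (length p + s)"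
    using gap_decomposable_periodic_avoiding[OF gap_decomposable_cam_word[OF pq(1)]
        avoids_on_window[OF pq(2) never]] s by simp
  moreover have "cam_word j ! (length p + (s + ?D)) = x (t + int ?D)"
    using nth_window_in_word[OF pq(2), of "s + ?D"] s by simp
  moreover have "cam_word j ! (length p + s) = x t"
    using nth_window_in_word[OF pq(2), of s] s by simp
  ultimately show "shift_by (int ?D) x t = x t"
    by (simp add: shift_by_apply add.assoc)
qed

text \<open>An infinite closed invariant subset must contain occurrences of every \<open>cam_word k\<close>,
  since otherwise all its points would share the period \<open>gap_period k\<close>; shifting these
  occurrences reaches every cylinder around a point of \<open>cam_shift\<close>.\<close>

lemma almost_minimal_cam_shift: "almost_minimal cam_shift"
  unfolding almost_minimal_def
proof (intro allI impI, elim conjE)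
  fix D assume sub: "D \<subseteq> cam_shift" and closed: "closedin shift_top D"
    and inv: "shift_invariant D" and inf: "infinite D"
  have occurs: "\<exists>y\<in>D. \<exists>c. occurs_at (cam_word k) y c" for k
  proof (rule ccontr)
    assume "\<not> ?thesis"
    then have "D \<subseteq> {x. shift_by (int (gap_period k)) x = x}"
      using sub cam_shift_periodic_if_not_occurs by blast
    moreover have "finite {x :: int \<Rightarrow> bool. shift_by (int (gap_period k)) x = x}"
      using gap_period_pos[of k] by (intro finite_periodic_points) simp
    ultimately show False
      using inf finite_subset by blast
  qed
  have "x \<in> shift_top closure_of D" if x: "x \<in> cam_shift" for x
    unfolding in_closure_of
  proof (intro conjI allI impI; (elim conjE)?)
    fix W assume "x \<in> W" "openin shift_top W"
    then obtain N where N: "cylinder x N \<subseteq> W"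
      using openin_contains_cylinder by blast
    obtain j p q where pq: "cam_word j = p @ window x N @ q"
      using x by (rule cam_shift_windowE)
    obtain y c where y: "y \<in> D" "occurs_at (cam_word j) y c"
      using occurs by blast
    let ?y = "shift_by (c + int (length p) + int N) y"
    have "?y \<in> D"
      using inv y(1) by (rule shift_invariantD)
    moreover have "?y \<in> W"
      using window_shift_by_occurrence[OF y(2) pq] N by (auto simp: window_eq_iff_cylinder)
    ultimately show "\<exists>y. y \<in> D \<and> y \<in> W"
      by blast
  qed simp
  then show "D = cam_shift"
    using sub closure_of_closedin[OF closed] by blast
qed

section \<open>Shifts of finite type\<close>

definition window_determined :: "nat \<Rightarrow> (int \<Rightarrow> 'a) set \<Rightarrow> bool" where
  "window_determined L Y \<longleftrightarrow>
     (\<forall>x. (\<forall>n. \<exists>y\<in>Y. \<exists>d. \<forall>i. n \<le> i \<and> i < n + int L \<longrightarrow> x i = y (i + d)) \<longrightarrow> x \<in> Y)"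

lemma window_determinedD:
  assumes "window_determined L Y" "\<And>n. \<exists>y\<in>Y. \<exists>d. \<forall>i. n \<le> i \<and> i < n + int L \<longrightarrow> x i = y (i + d)"
  shows "x \<in> Y"
  using assms unfolding window_determined_def by blast

lemma is_SFT_window_determined:
  assumes "is_SFT Y"
  obtains L where "window_determined L Y"
proof -
  obtain F :: "'a list set" where F: "finite F" "Y = {x. \<forall>w\<in>F. \<forall>n. \<not> occurs_at w x n}"
    using assms unfolding is_SFT_def by blast
  define L where "L = Max (insert 0 (length ` F))"
  have L: "length w \<le> L" if "w \<in> F" for w
    unfolding L_def using F(1) that by (intro Max_ge) auto
  have "x \<in> Y" if windows: "\<And>n. \<exists>y\<in>Y. \<exists>d. \<forall>i. n \<le> i \<and> i < n + int L \<longrightarrow> x i = y (i + d)" for x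
  proof -
    have "\<not> occurs_at w x n" if w: "w \<in> F" for w n
    proof
      assume occ: "occurs_at w x n"
      obtain y d where y: "y \<in> Y" "\<forall>i. n \<le> i \<and> i < n + int L \<longrightarrow> x i = y (i + d)"
        using windows by blast
      have "occurs_at w y (n + d)"
        unfolding occurs_at_def
      proof (intro allI impI)
        fix i assume i: "i < length w"
        then have "x (n + int i) = w ! i" "n + int i < n + int L"
          using occ L[OF w] unfolding occurs_at_def by auto
        then show "y (n + d + int i) = w ! i"
          using y(2)[rule_format, of "n + int i"] by (simp add: add_ac)
      qed
      then show False
        using y(1) w F(2) by blast
    qed
    then show ?thesis
      using F(2) by blast
  qed
  then have "window_determined L Y"
    unfolding window_determined_def by blast
  then show ?thesis
    by (rule that)
qed

lemma window_determined_shift_by: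
  assumes "window_determined L Y" "y \<in> Y"
  shows "shift_by d y \<in> Y"
  using assms by (intro window_determinedD[OF assms(1)]) (auto simp: shift_by_apply)

lemma window_determined_glue:
  assumes "window_determined L Y" "x1 \<in> Y" "x2 \<in> Y"
    and "shift_by n x1 \<in> cylinder e L" "x2 \<in> cylinder e L"
  shows "(\<lambda>i. if i < n then x1 i else x2 (i - n)) \<in> Y"
proof (rule window_determinedD[OF assms(1)])
  fix k
  show "\<exists>y\<in>Y. \<exists>d. \<forall>i. k \<le> i \<and> i < k + int L \<longrightarrow> (if i < n then x1 i else x2 (i - n)) = y (i + d)"
  proof (cases "n \<le> k")
    case True
    then show ?thesis
      using assms(3) by (intro bexI[of _ x2] exI[of _ "- n"]) auto
  next
    case False
    have "(if i < n then x1 i else x2 (i - n)) = x1 (i + 0)" if i: "k \<le> i \<and> i < k + int L" for i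
    proof (cases "i < n")
      case False
      then have "\<bar>i - n\<bar> \<le> int L"
        using i \<open>\<not> n \<le> k\<close> by auto
      then have "x2 (i - n) = e (i - n)" "x1 (n + (i - n)) = e (i - n)"
        using assms(4,5) unfolding cylinder_def by (auto simp: shift_by_apply add.commute)
      then show ?thesis
        using False by simp
    qed simp
    then show ?thesis
      using assms(2) by blast
  qed
qed

lemma mixing_shift_cylinders:
  assumes "mixing_shift Y" "u \<in> Y" "v \<in> Y"
  obtains N where "\<forall>n\<ge>N. \<exists>x\<in>Y. x \<in> cylinder u R \<and> shift_by (int n) x \<in> cylinder v R"
proof -
  have open_nonempty: "openin (subtopology shift_top Y) (cylinder w R \<inter> Y)" "cylinder w R \<inter> Y \<noteq> {}"
    if "w \<in> Y" for w :: "int \<Rightarrow> 'a"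
  proof -
    show "openin (subtopology shift_top Y) (cylinder w R \<inter> Y)"
      using openin_cylinder[of w R] by (auto simp: openin_subtopology)
    have "w \<in> cylinder w R \<inter> Y"
      using that by simp
    then show "cylinder w R \<inter> Y \<noteq> {}"
      by blast
  qed
  obtain N where "\<forall>n\<ge>N. (shift ^^ n) ` (cylinder u R \<inter> Y) \<inter> (cylinder v R \<inter> Y) \<noteq> {}"
    using assms open_nonempty[OF assms(2)] open_nonempty[OF assms(3)]
    unfolding mixing_shift_def by blast
  then show ?thesis
    using that unfolding funpow_shift by blast
qed

lemma mixing_window_determined_path:
  assumes "window_determined L Y" "mixing_shift Y" "u \<in> Y" "v \<in> Y" "w \<in> Y"
  obtains N where "\<forall>n\<ge>N. \<forall>m\<ge>N. \<exists>z\<in>Y. z \<in> cylinder u L \<and>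
      shift_by (int n) z \<in> cylinder v L \<and> shift_by (int n + int m) z \<in> cylinder w L"
proof -
  obtain N1 where N1: "\<forall>n\<ge>N1. \<exists>x\<in>Y. x \<in> cylinder u L \<and> shift_by (int n) x \<in> cylinder v L"
    using mixing_shift_cylinders[OF assms(2,3,4)] by blast
  obtain N2 where N2: "\<forall>m\<ge>N2. \<exists>x\<in>Y. x \<in> cylinder v L \<and> shift_by (int m) x \<in> cylinder w L"
    using mixing_shift_cylinders[OF assms(2,4,5)] by blast
  have "\<exists>z\<in>Y. z \<in> cylinder u L \<and>
      shift_by (int n) z \<in> cylinder v L \<and> shift_by (int n + int m) z \<in> cylinder w L"
    if n: "n \<ge> max (max N1 N2) (Suc L)" and m: "m \<ge> max (max N1 N2) (Suc L)" for n m
  proof -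
    obtain x1 where x1: "x1 \<in> Y" "x1 \<in> cylinder u L" "shift_by (int n) x1 \<in> cylinder v L"
      using N1 n by auto
    obtain x2 where x2: "x2 \<in> Y" "x2 \<in> cylinder v L" "shift_by (int m) x2 \<in> cylinder w L"
      using N2 m by auto
    define z where "z = (\<lambda>i. if i < int n then x1 i else x2 (i - int n))"
    have "z \<in> Y"
      unfolding z_def using assms(1) x1(1) x2(1) x1(3) x2(2) by (rule window_determined_glue)
    moreover have "z \<in> cylinder u L"
      using x1(2) n unfolding z_def cylinder_def by auto
    moreover have "shift_by (int n) z \<in> cylinder v L"
      using x1(3) x2(2) unfolding z_def cylinder_def by (auto simp: shift_by_apply add.commute)
    moreover have "shift_by (int n + int m) z \<in> cylinder w L"
      using x2(3) m unfolding z_def cylinder_def by (auto simp: shift_by_apply algebra_simps)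
    ultimately show ?thesis
      by blast
  qed
  then show ?thesis
    using that by blast
qed

section \<open>Embedding the binary subshift into a mixing shift of finite type\<close>

locale marker_pair =
  fixes Y :: "(int \<Rightarrow> 'a::finite) set" and L :: nat
    and z0 z1 c :: "int \<Rightarrow> 'a" and p m :: int
  assumes window_determined: "window_determined L Y"
    and in_Y: "z0 \<in> Y" "z1 \<in> Y"
    and start: "z0 \<in> cylinder c L" "z1 \<in> cylinder c L"
    and return: "shift_by p z0 \<in> cylinder c L" "shift_by p z1 \<in> cylinder c L"
    and long: "int L \<le> p"
    and differ: "0 \<le> m" "m < p" "z0 m \<noteq> z1 m"

lemma infinite_shift_points_differ_at_0:
  assumes "window_determined L Y" "infinite Y"
  obtains a b where "a \<in> Y" "b \<in> Y" "a 0 \<noteq> b 0"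
proof -
  obtain y1 where y1: "y1 \<in> Y"
    using assms(2) by (metis ex_in_conv finite.emptyI)
  moreover have "Y \<noteq> {y1}"
    using assms(2) by auto
  ultimately obtain y2 where "y2 \<in> Y" "y2 \<noteq> y1"
    by blast
  then obtain j where "y1 j \<noteq> y2 j"
    by (metis ext)
  then show ?thesis
    using that window_determined_shift_by[OF assms(1) y1] window_determined_shift_by[OF assms(1) \<open>y2 \<in> Y\<close>]
    by (metis add_0 shift_by_apply)
qed

lemma marker_pair_exists:
  assumes "window_determined L Y" "infinite Y" "mixing_shift Y"
  shows "\<exists>z0 z1 c p m. marker_pair Y L z0 z1 c p m"
proof -
  obtain a b where ab: "a \<in> Y" "b \<in> Y" "a 0 \<noteq> b 0"
    using assms(1,2) by (rule infinite_shift_points_differ_at_0)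
  obtain N1 where N1: "\<forall>n\<ge>N1. \<forall>m\<ge>N1. \<exists>z\<in>Y. z \<in> cylinder a L \<and>
      shift_by (int n) z \<in> cylinder a L \<and> shift_by (int n + int m) z \<in> cylinder a L"
    using mixing_window_determined_path[OF assms(1,3) ab(1) ab(1) ab(1)] by blast
  obtain N2 where N2: "\<forall>n\<ge>N2. \<forall>m\<ge>N2. \<exists>z\<in>Y. z \<in> cylinder a L \<and>
      shift_by (int n) z \<in> cylinder b L \<and> shift_by (int n + int m) z \<in> cylinder a L"
    using mixing_window_determined_path[OF assms(1,3) ab(1) ab(2) ab(1)] by blast
  define n where "n = max N1 N2 + L + 1"
  have n: "N1 \<le> n" "N2 \<le> n"
    unfolding n_def by auto
  obtain z0 where z0: "z0 \<in> Y" "z0 \<in> cylinder a L"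
      "shift_by (int n) z0 \<in> cylinder a L" "shift_by (int n + int n) z0 \<in> cylinder a L"
    using N1[rule_format, OF n(1) n(1)] by blast
  obtain z1 where z1: "z1 \<in> Y" "z1 \<in> cylinder a L"
      "shift_by (int n) z1 \<in> cylinder b L" "shift_by (int n + int n) z1 \<in> cylinder a L"
    using N2[rule_format, OF n(2) n(2)] by blast
  have "z0 (int n) = a 0" "z1 (int n) = b 0"
    using cylinderD[OF z0(3), of 0] cylinderD[OF z1(3), of 0] by (simp_all add: shift_by_apply)
  then have "marker_pair Y L z0 z1 a (int n + int n) (int n)"
    using assms(1) z0 z1 ab(3) unfolding n_def by unfold_locales auto
  then show ?thesis
    by blast
qed

context marker_pair
begin

definition marker :: "bool \<Rightarrow> int \<Rightarrow> 'a" where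
  "marker b = (if b then z1 else z0)"

definition block_code :: "(int \<Rightarrow> bool) \<Rightarrow> int \<Rightarrow> 'a" where
  "block_code x = (\<lambda>i. marker (x (i div p)) (i mod p))"

lemma p_pos: "0 < p"
  using differ by simp

lemma marker_in_Y: "marker b \<in> Y"
  by (simp add: marker_def in_Y)

lemma marker_start: "\<bar>i\<bar> \<le> int L \<Longrightarrow> marker b i = c i"
  using start unfolding marker_def cylinder_def by auto

lemma marker_return: "\<bar>i\<bar> \<le> int L \<Longrightarrow> marker b (p + i) = c i"
  using return unfolding marker_def cylinder_def by (auto simp: shift_by_apply add.commute)

text \<open>Every window of length \<open>L\<close> of a coded point lies in a single marker, possibly overlapping
  the start of the next one, where the two markers agree.\<close>

lemma block_code_in_Y: "block_code x \<in> Y"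
proof (rule window_determinedD[OF window_determined])
  fix k
  define q where "q = k div p"
  have k: "q * p \<le> k" "k < q * p + p"
    unfolding q_def using p_pos by (simp_all add: mult.commute minus_mod_eq_mult_div[symmetric])
  have divmod: "(r * p + s) div p = r" "(r * p + s) mod p = s" if "0 \<le> s" "s < p" for r s
    using that by (simp_all add: add.commute)
  have "block_code x i = marker (x q) (i - q * p)" if i: "k \<le> i" "i < k + int L" for i
  proof (cases "i < q * p + p")
    case True
    then have "i div p = q" "i mod p = i - q * p"
      using i k divmod[of "i - q * p" q] by simp_all
    then show ?thesis
      unfolding block_code_def by simp
  next
    case False
    then have "i div p = q + 1" "i mod p = i - (q + 1) * p"
      using i k long divmod[of "i - (q + 1) * p" "q + 1"] by (simp_all add: algebra_simps)
    moreover have near: "\<bar>i - (q + 1) * p\<bar> \<le> int L"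
      using False i k by (simp add: algebra_simps)
    ultimately have "block_code x i = c (i - (q + 1) * p)"
      unfolding block_code_def using marker_start by simp
    also have "\<dots> = marker (x q) (p + (i - (q + 1) * p))"
      using marker_return[OF near] by simp
    finally show ?thesis
      by (simp add: algebra_simps)
  qed
  then show "\<exists>y\<in>Y. \<exists>d. \<forall>i. k \<le> i \<and> i < k + int L \<longrightarrow> block_code x i = y (i + d)"
    using marker_in_Y[of "x q"] by (intro bexI[of _ "marker (x q)"] exI[of _ "- (q * p)"]) simp_all
qed

lemma shift_by_block_code: "shift_by (p * q) (block_code x) = block_code (shift_by q x)"
proof
  fix i
  have "(i + p * q) div p = i div p + q" "(i + p * q) mod p = i mod p"
    using p_pos by (simp_all add: mult.commute)
  then show "shift_by (p * q) (block_code x) i = block_code (shift_by q x) i"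
    unfolding block_code_def by (simp add: shift_by_apply)
qed

lemma inj_block_code: "inj block_code"
proof (rule injI)
  fix x y assume eq: "block_code x = block_code y"
  show "x = y"
  proof
    fix i
    have "(i * p + m) div p = i" "(i * p + m) mod p = m"
      using differ p_pos by simp_all
    then have "marker (x i) m = marker (y i) m"
      using fun_cong[OF eq, of "i * p + m"] unfolding block_code_def by simp
    then show "x i = y i"
      using differ(3) unfolding marker_def by (cases "x i"; cases "y i") auto
  qed
qed

lemma continuous_map_block_code: "continuous_map shift_top shift_top block_code"
  unfolding shift_top_def continuous_map_componentwise_UNIV block_code_def
proof
  fix k
  have projection: "continuous_map (product_topology (\<lambda>_. discrete_topology UNIV) UNIV) (discrete_topology UNIV)
      (\<lambda>x::int \<Rightarrow> bool. x (k div p))"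
    by (rule continuous_map_product_projection) simp
  have "continuous_map (discrete_topology UNIV) (discrete_topology UNIV) (\<lambda>b. marker b (k mod p))"
    by simp
  from continuous_map_compose[OF projection this] show "continuous_map (product_topology (\<lambda>_. discrete_topology UNIV) UNIV) (discrete_topology UNIV)
      (\<lambda>x. marker (x (k div p)) (k mod p))"
    by (simp add: o_def)
qed

definition coded_shift :: "(int \<Rightarrow> 'a) set" where
  "coded_shift = (\<Union>j\<in>{0..<p}. shift_by j ` block_code ` cam_shift)"

lemma shift_by_block_code_in_coded_shift:
  assumes "x \<in> cam_shift"
  shows "shift_by d (block_code x) \<in> coded_shift"
proof -
  have "shift_by d (block_code x) = shift_by (d mod p) (shift_by (p * (d div p)) (block_code x))"
    by (simp add: mod_mult_div_eq)
  also have "\<dots> = shift_by (d mod p) (block_code (shift_by (d div p) x))"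
    by (simp only: shift_by_block_code)
  finally show ?thesis
    unfolding coded_shift_def using p_pos assms shift_invariant_cam_shift
    by (auto intro!: bexI[of _ "d mod p"] simp: shift_invariantD)
qed

lemma coded_shiftE:
  assumes "y \<in> coded_shift"
  obtains j x where "x \<in> cam_shift" "0 \<le> j" "j < p" "y = shift_by j (block_code x)"
  using assms unfolding coded_shift_def by auto

lemma shift_invariant_coded_shift: "shift_invariant coded_shift"
  by (rule shift_invariantI) (auto elim!: coded_shiftE intro: shift_by_block_code_in_coded_shift)

lemma coded_shift_subset: "coded_shift \<subseteq> Y"
  using block_code_in_Y window_determined_shift_by[OF window_determined]
  by (auto elim!: coded_shiftE)

lemma closedin_coded_shift: "closedin shift_top coded_shift"
proof -
  have "compactin shift_top cam_shift"
    by (rule closedin_compact_space[OF compact_space_shift_top closedin_cam_shift])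
  then have "compactin shift_top (shift_by j ` block_code ` cam_shift)" for j
    using image_compactin continuous_map_block_code continuous_map_shift_by by metis
  then have "compactin shift_top coded_shift"
    unfolding coded_shift_def by (intro compactin_Union) auto
  then show ?thesis
    by (rule compactin_imp_closedin[OF Hausdorff_space_shift_top])
qed

lemma infinite_coded_shift: "infinite coded_shift"
proof
  assume "finite coded_shift"
  moreover have "block_code ` cam_shift \<subseteq> coded_shift"
    using shift_by_block_code_in_coded_shift[of _ 0] by auto
  ultimately have "finite cam_shift"
    using finite_subset finite_imageD inj_on_subset[OF inj_block_code subset_UNIV] by metis
  then show False
    using infinite_cam_shift by simp
qed

lemma coded_shift_periodic_dense:
  "coded_shift \<subseteq> shift_top closure_of {y\<in>coded_shift. periodic_point y}"
proof
  fix y assume "y \<in> coded_shift"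
  then obtain j x where x: "x \<in> cam_shift" "y = shift_by j (block_code x)"
    by (rule coded_shiftE)
  let ?f = "shift_by j \<circ> block_code"
  have cont: "continuous_map shift_top shift_top ?f"
    by (rule continuous_map_compose[OF continuous_map_block_code continuous_map_shift_by])
  have "periodic_point (?f z)" if z: "periodic_point z" for z
  proof -
    obtain P where P: "P > 0" "shift_by P z = z"
      using z unfolding periodic_point_def by blast
    have "shift_by (p * P) (?f z) = shift_by j (shift_by (p * P) (block_code z))"
      by (simp add: add.commute)
    also have "\<dots> = ?f z"
      using P(2) by (simp add: shift_by_block_code)
    finally show ?thesis
      unfolding periodic_point_def using P(1) p_pos by (intro exI[of _ "p * P"]) simp
  qed
  then have periodic: "?f ` {z\<in>cam_shift. periodic_point z} \<subseteq> {y\<in>coded_shift. periodic_point y}"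
    using shift_by_block_code_in_coded_shift by auto
  have "y \<in> ?f ` (shift_top closure_of {z\<in>cam_shift. periodic_point z})"
    using x cam_shift_periodic_dense by auto
  then have "y \<in> shift_top closure_of (?f ` {z\<in>cam_shift. periodic_point z})"
    by (rule subsetD[OF continuous_map_image_closure_subset[OF cont]])
  then show "y \<in> shift_top closure_of {y\<in>coded_shift. periodic_point y}"
    by (rule subsetD[OF closure_of_mono[OF periodic]])
qed

lemma closedin_block_code_preimage:
  "closedin shift_top D \<Longrightarrow> closedin shift_top {x\<in>cam_shift. block_code x \<in> D}"
  using closedin_Int[OF closedin_cam_shift closedin_continuous_map_preimage[OF continuous_map_block_code]]
  by (simp add: Collect_conj_eq)

lemma shift_invariant_block_code_preimage:
  assumes "shift_invariant D"
  shows "shift_invariant {x\<in>cam_shift. block_code x \<in> D}"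
proof (rule shift_invariantI)
  fix d x assume "x \<in> {x\<in>cam_shift. block_code x \<in> D}"
  then have "shift_by d x \<in> cam_shift" "shift_by (p * d) (block_code x) \<in> D"
    using shift_invariant_cam_shift assms by (simp_all add: shift_invariantD)
  then show "shift_by d x \<in> {x\<in>cam_shift. block_code x \<in> D}"
    by (simp add: shift_by_block_code)
qed

lemma shift_invariant_subset_coded_shift_cover:
  assumes "D \<subseteq> coded_shift" "shift_invariant D"
  shows "D \<subseteq> (\<lambda>(j, x). shift_by j (block_code x)) ` ({0..<p} \<times> {x\<in>cam_shift. block_code x \<in> D})"
proof
  fix y assume "y \<in> D"
  then have "y \<in> coded_shift"
    using assms(1) by blast
  then obtain j x where jx: "x \<in> cam_shift" "0 \<le> j" "j < p" "y = shift_by j (block_code x)"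
    by (rule coded_shiftE)
  then have "block_code x \<in> D"
    using shift_invariantD[OF assms(2) \<open>y \<in> D\<close>, of "- j"] by simp
  then have "(j, x) \<in> {0..<p} \<times> {x\<in>cam_shift. block_code x \<in> D}"
    using jx by simp
  then show "y \<in> (\<lambda>(j, x). shift_by j (block_code x)) ` ({0..<p} \<times> {x\<in>cam_shift. block_code x \<in> D})"
    using jx(4) by (auto intro: rev_image_eqI)
qed

text \<open>An infinite closed invariant subset of \<open>coded_shift\<close> is covered by \<open>p\<close> shifts of the
  image of its preimage under \<open>block_code\<close>, so that preimage is infinite, hence all of
  \<open>cam_shift\<close>.\<close>

lemma almost_minimal_coded_shift: "almost_minimal coded_shift"
  unfolding almost_minimal_def
proof (intro allI impI, elim conjE)
  fix D assume sub: "D \<subseteq> coded_shift" and closed: "closedin shift_top D"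
    and inv: "shift_invariant D" and inf: "infinite D"
  let ?D' = "{x\<in>cam_shift. block_code x \<in> D}"
  have "infinite ?D'"
  proof
    assume "finite ?D'"
    then have "finite ((\<lambda>(j, x). shift_by j (block_code x)) ` ({0..<p} \<times> ?D'))"
      by simp
    with inf show False
      using finite_subset[OF shift_invariant_subset_coded_shift_cover[OF sub inv]] by blast
  qed
  then have "?D' = cam_shift"
    using closedin_block_code_preimage[OF closed] shift_invariant_block_code_preimage[OF inv]
    by (intro almost_minimalD[OF almost_minimal_cam_shift]) auto
  have "coded_shift \<subseteq> D"
  proof
    fix y assume "y \<in> coded_shift"
    then obtain j x where "x \<in> cam_shift" "y = shift_by j (block_code x)"
      by (rule coded_shiftE)
    moreover from this(1) have "block_code x \<in> D"
      using \<open>?D' = cam_shift\<close> by blast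
    ultimately show "y \<in> D"
      using inv by (simp add: shift_invariantD)
  qed
  with sub show "D = coded_shift"
    by blast
qed

lemma CAM_system_coded_shift: "CAM_system (subtopology shift_top coded_shift) shift"
  using closedin_coded_shift shift_invariant_coded_shift infinite_coded_shift
    coded_shift_periodic_dense almost_minimal_coded_shift
  by (rule CAM_system_subshift)

end

theorem theorem2p9:
  fixes Y :: "(int \<Rightarrow> 'a::finite) set"
  assumes "is_SFT Y" and "infinite Y" and "mixing_shift Y"
  shows "\<exists>Z. Z \<subseteq> Y \<and> closedin shift_top Z \<and> shift ` Z = Z \<and>
             CAM_system (subtopology shift_top Z) shift"
proof -
  obtain L where "window_determined L Y"
    using assms(1) by (rule is_SFT_window_determined)
  then obtain z0 z1 c p m where "marker_pair Y L z0 z1 c p m"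
    using marker_pair_exists assms(2,3) by blast
  then interpret marker_pair Y L z0 z1 c p m .
  show ?thesis
    using coded_shift_subset closedin_coded_shift shift_invariant_coded_shift CAM_system_coded_shift
    by (auto simp: shift_image_eq_iff_shift_invariant)
qed

end
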